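(* Let $n,k$ be integers with $1\le k\le n<2k$ and let $N_0>0$. There is a constant $M_0$ depending only on $n,k,N_0$ such that the following holds. Let $\kappa=(\kappa_1,\dots,\kappa_n)\in\Gamma_k$ with maximum entry $\kappa_1\ge M_0$ and $\sigma_k(\kappa)\ge N_0$. Then for any indices $i\ne j$ with $\kappa_i>\kappa_1-\sqrt{\kappa_1}/n$, $$\frac{2\kappa_i\big(1-e^{\kappa_j-\kappa_i}\big)}{\kappa_i-\kappa_j}\sigma_k^{jj}(\kappa)\ge\sigma_k^{jj}(\kappa)+(\kappa_i+\kappa_j)\sigma_k^{ii,jj}(\kappa).$$
   Context: $\sigma_m$ is the $m$-th elementary symmetric function; $\Gamma_k=\{\kappa\in\mathbb{R}^n:\sigma_m(\kappa)>0,\ m=1,\dots,k\}$. $\sigma_k^{jj}(\kappa)=\partial\sigma_k/\partial\kappa_j$ and $\sigma_k^{ii,jj}(\kappa)=\partial^2\sigma_k/\partial\kappa_i\partial\kappa_j$. When $\kappa_i=\kappa_j$, the left-hand side is interpreted as its limit $2\kappa_i\sigma_k^{jj}(\kappa)$. *)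

theory Defs
  imports "HOL-Analysis.Analysis"
begin

text \<open>Vectors in R^n are functions nat => real, with entries kappa 1, ..., kappa n.\<close>

definition sigma :: "nat \<Rightarrow> nat \<Rightarrow> (nat \<Rightarrow> real) \<Rightarrow> real" where
  "sigma n m \<kappa> = (\<Sum>S\<in>{S. S \<subseteq> {1..n} \<and> card S = m}. \<Prod>i\<in>S. \<kappa> i)"

definition Gamma :: "nat \<Rightarrow> nat \<Rightarrow> (nat \<Rightarrow> real) set" where
  "Gamma n k = {\<kappa>. \<forall>m\<in>{1..k}. sigma n m \<kappa> > 0}"

definition sigma_d1 :: "nat \<Rightarrow> nat \<Rightarrow> (nat \<Rightarrow> real) \<Rightarrow> nat \<Rightarrow> real" where
  "sigma_d1 n k \<kappa> j = deriv (\<lambda>t. sigma n k (\<kappa>(j := t))) (\<kappa> j)"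

definition sigma_d2 :: "nat \<Rightarrow> nat \<Rightarrow> (nat \<Rightarrow> real) \<Rightarrow> nat \<Rightarrow> nat \<Rightarrow> real" where
  "sigma_d2 n k \<kappa> i j = deriv (\<lambda>s. sigma_d1 n k (\<kappa>(i := s)) j) (\<kappa> i)"

end

theory Submission
  imports Defs "HOL-Computational_Algebra.Polynomial"
begin

text \<open>Write a = \<kappa>_i, b = \<kappa>_j and let P, Q, R be the elementary symmetric functions of
  degrees k-2, k-1, k of the other n-2 entries, so that \<sigma>_k^{jj} = aP + Q, \<sigma>_k^{ii,jj} = P and
  \<sigma>_k = abP + (a+b)Q + R. Newton's inequality for the other entries holds with a margin 1/(kn);
  it gives \<sigma>_k^{jj} \<sigma>_k^{ii} - \<sigma>_k P = Q^2 - PR \<ge> 0 and lower bounds of order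
  min(a,b)^2 P/(a+b) for \<sigma>_k^{jj} and \<sigma>_k^{ii}. Every entry of a point of \<Gamma>_k is at least
  -(n-k)/k times the largest one, and (n-k)/k < 1 because n < 2k. As a is close to the largest
  entry \<kappa>_1, elementary estimates finish the proof once \<kappa>_1 is large, separately for b \<ge> a,
  for \<kappa>_1/4 \<le> b < a and for b < \<kappa>_1/4; in the last case e^{b-a} \<le> e^{-\<kappa>_1/2} beats the
  polynomial growth of \<sigma>_k^{jj}, while \<sigma>_k^{jj} \<sigma>_k^{ii} \<ge> N_0 P keeps \<sigma>_k^{ii} from being small.\<close>

section \<open>Newton's inequalities\<close>

fun esym :: "nat \<Rightarrow> real list \<Rightarrow> real" where
  "esym 0 xs = 1"
| "esym (Suc r) [] = 0"
| "esym (Suc r) (x # xs) = x * esym r xs + esym (Suc r) xs"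

lemma esym_eq_0_if_length_less: "length xs < r \<Longrightarrow> esym r xs = 0"
  by (induction r xs rule: esym.induct) auto

lemma esym_length: "esym (length xs) xs = prod_list xs"
  by (induction xs) (auto simp: esym_eq_0_if_length_less)

lemma esym_1: "esym 1 xs = sum_list xs"
  by (induction xs) auto

lemma esym_2: "2 * esym 2 xs = (sum_list xs)\<^sup>2 - sum_list (map (\<lambda>x. x\<^sup>2) xs)"
proof (induction xs)
  case (Cons x xs)
  have "esym 2 (x # xs) = x * sum_list xs + esym 2 xs"
    by (simp add: numeral_2_eq_2 flip: esym_1)
  then show ?case using Cons by (simp add: power2_eq_square algebra_simps)
qed (simp add: numeral_2_eq_2)

definition prod_X_plus :: "real list \<Rightarrow> real poly" where
  "prod_X_plus xs = (\<Prod>x\<leftarrow>xs. [:x, 1:])"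

lemma poly_prod_X_plus: "poly (prod_X_plus xs) t = (\<Prod>x\<leftarrow>xs. t + x)"
  by (induction xs) (auto simp: prod_X_plus_def algebra_simps)

lemma coeff_prod_X_plus:
  "coeff (prod_X_plus xs) i = (if i \<le> length xs then esym (length xs - i) xs else 0)"
proof (induction xs arbitrary: i)
  case Nil
  then show ?case by (simp add: prod_X_plus_def coeff_pCons split: nat.split)
next
  case (Cons x xs)
  have rec: "prod_X_plus (x # xs) = smult x (prod_X_plus xs) + pCons 0 (prod_X_plus xs)"
    by (simp add: prod_X_plus_def)
  show ?case
  proof (cases i)
    case 0
    then show ?thesis
      using Cons esym_eq_0_if_length_less[of xs "Suc (length xs)"] by (simp add: rec)
  next
    case (Suc j)
    show ?thesis
    proof (cases "Suc j \<le> length xs")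
      case True
      then have "length xs - j = Suc (length xs - Suc j)" by simp
      then show ?thesis using Cons Suc True by (simp add: rec)
    next
      case False
      then show ?thesis
        using Cons Suc esym_eq_0_if_length_less[of xs "length xs - j"] by (auto simp: rec)
    qed
  qed
qed

lemma degree_prod_X_plus: "degree (prod_X_plus xs) = length xs"
  by (rule antisym; (rule degree_le le_degree)?) (simp_all add: coeff_prod_X_plus)

lemma exists_pderiv_roots:
  fixes p :: "real poly"
  assumes "finite U" and roots: "\<And>u. u \<in> U \<Longrightarrow> poly p u = 0"
  shows "\<exists>Z. finite Z \<and> card Z = card U - 1 \<and> (\<forall>z\<in>Z. poly (pderiv p) z = 0)"
proof -
  define us where "us = sorted_list_of_set U"
  define m where "m = card U - 1"
  have us: "sorted_wrt (<) us" "set us = U" "length us = card U"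
    using assms(1) by (simp_all add: us_def)
  have "\<exists>z. us ! i < z \<and> z < us ! Suc i \<and> poly (pderiv p) z = 0" if "i < m" for i
  proof -
    have lt: "us ! i < us ! Suc i"
      using that us by (simp add: m_def sorted_wrt_iff_nth_less)
    have "poly p (us ! i) = poly p (us ! Suc i)"
      using that us roots by (metis Suc_lessD less_diff_conv m_def Suc_eq_plus1 nth_mem)
    moreover have "continuous_on {us ! i..us ! Suc i} (poly p)"
      by (intro continuous_intros)
    moreover have "poly p differentiable (at x)" for x
      using poly_DERIV real_differentiable_def by blast
    ultimately obtain z where "us ! i < z" "z < us ! Suc i" "DERIV (poly p) z :> 0"
      using Rolle[OF lt] by blast
    then show ?thesis using poly_DERIV DERIV_unique by blast
  qed
  then obtain g where g: "\<And>i. i < m \<Longrightarrow> us ! i < g i \<and> g i < us ! Suc i \<and> poly (pderiv p) (g i) = 0"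
    by metis
  have g_mono: "g i < g j" if "i < j" "j < m" for i j
  proof -
    have "us ! Suc i \<le> us ! j"
    proof (cases "Suc i = j")
      case False
      then show ?thesis
        using us that by (simp add: m_def sorted_wrt_iff_nth_less less_imp_le)
    qed simp
    moreover have "g i < us ! Suc i" "us ! j < g j"
      using g that by auto
    ultimately show ?thesis by linarith
  qed
  have "inj_on g {..<m}"
    by (rule linorder_inj_onI') (metis g_mono lessThan_iff less_irrefl)
  then show ?thesis
    using g by (intro exI[of _ "g ` {..<m}"]) (auto simp: card_image m_def)
qed

lemma pderiv_prod_X_plus_distinct:
  assumes "distinct xs" and "length xs = Suc m"
  obtains ys where "distinct ys" "length ys = m"
    "pderiv (prod_X_plus xs) = smult (real (Suc m)) (prod_X_plus ys)"
proof -
  have roots: "poly (prod_X_plus xs) u = 0" if "u \<in> uminus ` set xs" for u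
    using that by (force simp: poly_prod_X_plus prod_list_zero_iff)
  have "card (uminus ` set xs) = Suc m"
    using assms by (simp add: card_image distinct_card)
  then obtain Z where Z: "finite Z" "card Z = m" "\<forall>z\<in>Z. poly (pderiv (prod_X_plus xs)) z = 0"
    using exists_pderiv_roots[of "uminus ` set xs" "prod_X_plus xs"] roots by auto
  define ys where "ys = map uminus (sorted_list_of_set Z)"
  have ys: "distinct ys" "length ys = m" "set ys = uminus ` Z"
    using Z by (simp_all add: ys_def distinct_map)
  have "pderiv (prod_X_plus xs) = smult (real (Suc m)) (prod_X_plus ys)"
  proof (rule poly_eqI_degree_lead_coeff[where n = m and A = Z])
    fix z assume "z \<in> Z"
    moreover have "poly (prod_X_plus ys) z = 0"
      using \<open>z \<in> Z\<close> ys(3) by (force simp: poly_prod_X_plus prod_list_zero_iff)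
    ultimately show "poly (pderiv (prod_X_plus xs)) z = poly (smult (real (Suc m)) (prod_X_plus ys)) z"
      using Z by simp
  qed (use assms Z ys in \<open>simp_all add: coeff_pderiv coeff_prod_X_plus degree_pderiv degree_prod_X_plus\<close>)
  then show ?thesis using that ys by blast
qed

text \<open>By Rolle's theorem the derivative of a real-rooted polynomial is again real-rooted, and
  differentiating \<open>prod_X_plus\<close> preserves the normalised means \<open>esym_mean\<close>. This reduces
  Newton's inequality to lists of length \<open>t + 2\<close>.\<close>

definition esym_mean :: "nat \<Rightarrow> real list \<Rightarrow> real" where
  "esym_mean r xs = esym r xs / real (length xs choose r)"

lemma esym_mean_pderiv:
  assumes "distinct xs" and "length xs = Suc m"
  obtains ys where "distinct ys" "length ys = m" "\<And>r. r \<le> m \<Longrightarrow> esym_mean r ys = esym_mean r xs"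
proof -
  obtain ys where ys: "distinct ys" "length ys = m"
    and deriv: "pderiv (prod_X_plus xs) = smult (real (Suc m)) (prod_X_plus ys)"
    using pderiv_prod_X_plus_distinct[OF assms] .
  have "esym_mean r ys = esym_mean r xs" if "r \<le> m" for r
  proof -
    have "real (Suc m - r) * esym r xs = real (Suc m) * esym r ys"
      using arg_cong[OF deriv, of "\<lambda>p. coeff p (m - r)"] that assms(2) ys(2)
      by (simp add: coeff_pderiv coeff_prod_X_plus Suc_diff_le)
    then have "esym r ys = real (Suc m - r) * esym r xs / real (Suc m)"
      by (simp add: eq_divide_eq mult.commute)
    then have "esym_mean r ys = real (Suc m - r) * esym r xs / (real (Suc m) * real (m choose r))"
      using ys(2) by (simp add: esym_mean_def)
    also have "\<dots> = real (Suc m - r) * esym r xs / (real (Suc m - r) * real (Suc m choose r))"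
      using binomial_absorb_comp[of "Suc m" r] by (metis diff_Suc_1 of_nat_mult)
    also have "\<dots> = esym_mean r xs"
      using that assms(2) by (simp add: esym_mean_def)
    finally show ?thesis .
  qed
  then show ?thesis using that ys by blast
qed

lemma esym_map_inverse:
  assumes "0 \<notin> set xs" and "r \<le> length xs"
  shows "esym r (map inverse xs) * prod_list xs = esym (length xs - r) xs"
  using assms
proof (induction xs arbitrary: r)
  case (Cons x xs)
  show ?case
  proof (cases r)
    case 0
    then show ?thesis
      using esym_eq_0_if_length_less[of xs "Suc (length xs)"] by (simp add: esym_length)
  next
    case (Suc r')
    have IH: "esym s (map inverse xs) * prod_list xs = (if s \<le> length xs then esym (length xs - s) xs else 0)" for s
      using Cons esym_eq_0_if_length_less[of "map inverse xs" s] by auto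
    have "esym r (map inverse (x # xs)) * prod_list (x # xs)
        = esym r' (map inverse xs) * prod_list xs + x * (esym (Suc r') (map inverse xs) * prod_list xs)"
      using Suc Cons.prems by (simp add: field_simps)
    also have "\<dots> = esym (length (x # xs) - r) (x # xs)"
    proof (cases "Suc r' \<le> length xs")
      case True
      then have "length xs - r' = Suc (length xs - Suc r')" by simp
      then show ?thesis using True Suc by (simp add: IH)
    qed (use Suc Cons.prems in \<open>simp add: IH\<close>)
    finally show ?thesis .
  qed
qed simp

lemma newton_esym_bottom:
  "2 * real (length xs) * esym 2 xs \<le> (real (length xs) - 1) * (esym 1 xs)\<^sup>2"
proof -
  have cs: "(sum_list xs)\<^sup>2 \<le> real (length xs) * sum_list (map (\<lambda>x. x\<^sup>2) xs)"
    using sum_squared_le_sum_of_squares[of "(!) xs" "{0..<length xs}"]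
    by (simp add: sum_list_sum_nth mult.commute)
  have "2 * real (length xs) * esym 2 xs
      = real (length xs) * ((sum_list xs)\<^sup>2 - sum_list (map (\<lambda>x. x\<^sup>2) xs))"
    using esym_2[of xs] by simp
  also have "\<dots> \<le> (real (length xs) - 1) * (sum_list xs)\<^sup>2"
    using cs by (simp add: algebra_simps)
  finally show ?thesis by (simp only: esym_1)
qed

text \<open>For \<open>t + 2\<close> nonzero entries, passing to reciprocals turns the claim into the case
  \<open>t = 0\<close>, which is the Cauchy-Schwarz inequality.\<close>

lemma newton_esym_top:
  assumes "length xs = Suc (Suc t)"
  shows "esym_mean t xs * esym_mean (Suc (Suc t)) xs \<le> (esym_mean (Suc t) xs)\<^sup>2"
proof (cases "0 \<in> set xs")
  case True
  then have "prod_list xs = 0" by (simp add: prod_list_zero_iff)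
  then show ?thesis
    using esym_length[of xs] assms by (simp add: esym_mean_def)
next
  case False
  define L where "L = real (length xs)"
  define zs where "zs = map inverse xs"
  define P where "P = prod_list xs"
  have L: "L > 1" using assms by (simp add: L_def)
  have "real (Suc (Suc t) choose 2) = real (Suc (Suc t)) * real (Suc t) / 2"
    by (auto simp add: choose_two field_char_0_class.of_nat_div mod_eq_0_iff_dvd field_simps)
  then have choose_t: "L * (L - 1) = 2 * real (Suc (Suc t) choose t)"
    using binomial_symmetric[of t "Suc (Suc t)"] assms by (simp add: L_def)
  have mean_t: "esym_mean t xs = 2 * (esym 2 zs * P) / (L * (L - 1))"
    using esym_map_inverse[OF False, of 2] assms by (simp add: esym_mean_def zs_def P_def choose_t)
  have mean_t1: "esym_mean (Suc t) xs = esym 1 zs * P / L"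
    using esym_map_inverse[OF False, of 1] assms binomial_symmetric[of "Suc t" "Suc (Suc t)"]
    by (simp add: esym_mean_def zs_def P_def L_def)
  have mean_t2: "esym_mean (Suc (Suc t)) xs = P"
    using esym_length[of xs] assms by (simp add: esym_mean_def P_def)
  have "esym_mean t xs * esym_mean (Suc (Suc t)) xs = 2 * L * esym 2 zs * P\<^sup>2 / (L\<^sup>2 * (L - 1))"
    using mean_t mean_t2 L by (simp add: field_simps power2_eq_square)
  also have "\<dots> \<le> (L - 1) * (esym 1 zs)\<^sup>2 * P\<^sup>2 / (L\<^sup>2 * (L - 1))"
    using newton_esym_bottom[of zs] L
    by (intro divide_right_mono mult_right_mono) (simp_all add: L_def zs_def)
  also have "\<dots> = (esym_mean (Suc t) xs)\<^sup>2"
    unfolding mean_t1 using L by (simp add: field_simps power2_eq_square)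
  finally show ?thesis .
qed

lemma newton_esym_distinct:
  assumes "distinct xs" and "Suc (Suc t) \<le> length xs"
  shows "esym_mean t xs * esym_mean (Suc (Suc t)) xs \<le> (esym_mean (Suc t) xs)\<^sup>2"
  using assms
proof (induction "length xs" arbitrary: xs)
  case (Suc m)
  show ?case
  proof (cases "Suc (Suc t) = Suc m")
    case True
    then show ?thesis using newton_esym_top[of xs t] Suc.hyps(2) by simp
  next
    case False
    obtain ys where ys: "distinct ys" "length ys = m" "\<And>r. r \<le> m \<Longrightarrow> esym_mean r ys = esym_mean r xs"
      using esym_mean_pderiv[OF Suc.prems(1) Suc.hyps(2)[symmetric]] by blast
    have "esym_mean t ys * esym_mean (Suc (Suc t)) ys \<le> (esym_mean (Suc t) ys)\<^sup>2"
      using Suc.hyps(1)[of ys] ys(1,2) False Suc.prems(2) Suc.hyps(2) by simp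
    then show ?thesis using ys(3) False Suc.prems(2) Suc.hyps(2) by simp
  qed
qed simp

lemma isCont_esym:
  assumes "\<And>g. g \<in> set gs \<Longrightarrow> isCont g x"
  shows "isCont (\<lambda>e. esym r (map (\<lambda>g. g e) gs)) x"
  using assms
proof (induction gs arbitrary: r)
  case Nil
  then show ?case by (cases r) simp_all
next
  case (Cons g gs)
  then show ?case by (cases r) (simp_all add: continuous_intros)
qed

lemma eventually_distinct_perturbation:
  "eventually (\<lambda>e. distinct (map (\<lambda>i. xs ! i + e * real i) [0..<length xs])) (at_right (0::real))"
proof -
  define bad where "bad = (\<lambda>(i, j). (xs ! i - xs ! j) / (real j - real i)) ` {(i, j). i < j \<and> j < length xs}"
  have "finite {(i, j). i < j \<and> j < length xs}"
    by (rule finite_subset[of _ "{..<length xs} \<times> {..<length xs}"]) auto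
  then have "finite bad" by (simp add: bad_def)
  then have "eventually (\<lambda>e. \<forall>c\<in>bad. e \<noteq> c) (at_right (0::real))"
    by (intro eventually_ball_finite) (simp_all add: eventually_neq_at_within)
  then show ?thesis
  proof (rule eventually_mono)
    fix e assume good: "\<forall>c\<in>bad. e \<noteq> c"
    have "xs ! i + e * real i \<noteq> xs ! j + e * real j" if "i < j" "j < length xs" for i j
    proof
      assume "xs ! i + e * real i = xs ! j + e * real j"
      then have "e = (xs ! i - xs ! j) / (real j - real i)"
        using that by (simp add: field_simps)
      then show False using good that by (force simp: bad_def)
    qed
    then show "distinct (map (\<lambda>i. xs ! i + e * real i) [0..<length xs])"
      by (auto simp: distinct_map intro!: linorder_inj_onI')
  qed
qed

text \<open>Newton's inequality for arbitrary real lists follows from the case of distinct entries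
  by perturbing the entries apart and passing to the limit.\<close>

lemma newton_esym:
  assumes "Suc (Suc t) \<le> length xs"
  shows "esym_mean t xs * esym_mean (Suc (Suc t)) xs \<le> (esym_mean (Suc t) xs)\<^sup>2"
proof -
  define gs where "gs = map (\<lambda>i e. xs ! i + e * real i) [0..<length xs]"
  define perturb where "perturb e = map (\<lambda>g. g e) gs" for e :: real
  define F where "F ys = (esym_mean (Suc t) ys)\<^sup>2 - esym_mean t ys * esym_mean (Suc (Suc t)) ys" for ys
  have len: "length (perturb e) = length xs" for e
    by (simp add: perturb_def gs_def)
  have ev: "eventually (\<lambda>e. 0 \<le> F (perturb e)) (at_right 0)"
    using eventually_distinct_perturbation[of xs]
  proof (rule eventually_mono)
    fix e assume "distinct (map (\<lambda>i. xs ! i + e * real i) [0..<length xs])"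
    then show "0 \<le> F (perturb e)"
      using newton_esym_distinct[of "perturb e" t] assms len
      by (simp add: F_def perturb_def gs_def comp_def)
  qed
  have "((\<lambda>e. esym r (perturb e)) \<longlongrightarrow> esym r xs) (at_right 0)" for r
  proof -
    have "isCont (\<lambda>e. esym r (perturb e)) 0"
      unfolding perturb_def by (rule isCont_esym) (auto simp: gs_def)
    moreover have "perturb 0 = xs"
      by (simp add: perturb_def gs_def comp_def map_nth)
    ultimately show ?thesis
      by (metis isCont_def at_le tendsto_mono subset_UNIV)
  qed
  then have lim: "((\<lambda>e. F (perturb e)) \<longlongrightarrow> F xs) (at_right 0)"
    unfolding F_def esym_mean_def len by (intro tendsto_intros) (use assms in auto)
  have "0 \<le> F xs"
    by (rule tendsto_lowerbound[OF lim ev]) simp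
  then show ?thesis by (simp add: F_def)
qed

section \<open>Elementary symmetric functions of finite families\<close>

definition esym_on :: "'a set \<Rightarrow> nat \<Rightarrow> ('a \<Rightarrow> real) \<Rightarrow> real" where
  "esym_on A m f = (\<Sum>S\<in>{S. S \<subseteq> A \<and> card S = m}. \<Prod>i\<in>S. f i)"

lemma sigma_eq_esym_on: "sigma n m \<kappa> = esym_on {1..n} m \<kappa>"
  unfolding sigma_def esym_on_def ..

lemma esym_on_0 [simp]:
  assumes "finite A"
  shows "esym_on A 0 f = 1"
proof -
  have "S = {}" if "S \<subseteq> A" "card S = 0" for S
    using that finite_subset[OF that(1) assms] by simp
  then have "{S. S \<subseteq> A \<and> card S = 0} = {{}}" by auto
  then show ?thesis by (simp add: esym_on_def)
qed

lemma esym_on_eq_0_if_card_less: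
  assumes "finite A" and "card A < m"
  shows "esym_on A m f = 0"
proof -
  have none: "{S. S \<subseteq> A \<and> card S = m} = {}"
    using assms(2) by (auto dest: card_mono[OF assms(1)])
  show ?thesis unfolding esym_on_def none by simp
qed

lemma esym_on_cong: "(\<And>i. i \<in> A \<Longrightarrow> f i = g i) \<Longrightarrow> esym_on A m f = esym_on A m g"
  unfolding esym_on_def by (intro sum.cong refl prod.cong) auto

lemma subsets_card_Suc_insert:
  assumes "finite A" and "x \<notin> A"
  shows "{S. S \<subseteq> insert x A \<and> card S = Suc m}
    = insert x ` {S. S \<subseteq> A \<and> card S = m} \<union> {S. S \<subseteq> A \<and> card S = Suc m}"
proof (intro equalityI subsetI)
  fix S assume S: "S \<in> {S. S \<subseteq> insert x A \<and> card S = Suc m}"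
  show "S \<in> insert x ` {S. S \<subseteq> A \<and> card S = m} \<union> {S. S \<subseteq> A \<and> card S = Suc m}"
  proof (cases "x \<in> S")
    case True
    have "finite S" using S assms(1) finite_subset by auto
    then have "S - {x} \<in> {S. S \<subseteq> A \<and> card S = m}" using S True by auto
    moreover have "S = insert x (S - {x})" using True by blast
    ultimately show ?thesis by blast
  next
    case False
    then show ?thesis using S by blast
  qed
next
  fix S assume "S \<in> insert x ` {S. S \<subseteq> A \<and> card S = m} \<union> {S. S \<subseteq> A \<and> card S = Suc m}"
  then show "S \<in> {S. S \<subseteq> insert x A \<and> card S = Suc m}"
  proof (elim UnE imageE)
    fix T assume T: "T \<in> {S. S \<subseteq> A \<and> card S = m}" and "S = insert x T"
    moreover have "finite T" "x \<notin> T" using T assms finite_subset by auto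
    ultimately show ?thesis using T by auto
  qed blast
qed

lemma esym_on_insert:
  assumes "finite A" and "x \<notin> A"
  shows "esym_on (insert x A) (Suc m) f = f x * esym_on A m f + esym_on A (Suc m) f"
proof -
  let ?S = "\<lambda>B k. {S. S \<subseteq> B \<and> card S = k}"
  have "inj_on (insert x) (?S A m)"
  proof (rule inj_onI)
    fix S T assume "S \<in> ?S A m" "T \<in> ?S A m" "insert x S = insert x T"
    moreover have "x \<notin> S" "x \<notin> T" using calculation(1,2) assms(2) by blast+
    ultimately show "S = T" by (simp add: insert_ident)
  qed
  moreover have "insert x ` ?S A m \<inter> ?S A (Suc m) = {}"
    using assms(2) by blast
  moreover have "finite (?S A k)" for k
    by (rule finite_subset[of _ "Pow A"]) (use assms(1) in auto)
  ultimately have "esym_on (insert x A) (Suc m) f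
      = (\<Sum>S\<in>?S A m. \<Prod>i\<in>insert x S. f i) + esym_on A (Suc m) f"
    unfolding esym_on_def subsets_card_Suc_insert[OF assms]
    by (simp add: sum.union_disjoint sum.reindex)
  also have "(\<Sum>S\<in>?S A m. \<Prod>i\<in>insert x S. f i) = f x * esym_on A m f"
    unfolding esym_on_def sum_distrib_left
  proof (rule sum.cong[OF refl])
    fix S assume "S \<in> ?S A m"
    then have "finite S" "x \<notin> S" using assms finite_subset by auto
    then show "(\<Prod>i\<in>insert x S. f i) = f x * (\<Prod>i\<in>S. f i)" by simp
  qed
  finally show ?thesis .
qed

lemma esym_map_eq_esym_on: "distinct xs \<Longrightarrow> esym m (map f xs) = esym_on (set xs) m f"
proof (induction xs arbitrary: m)
  case Nil
  then show ?case by (cases m) (auto simp: esym_on_eq_0_if_card_less)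
next
  case (Cons x xs)
  then show ?case by (cases m) (auto simp: esym_on_insert)
qed

lemma newton_esym_on:
  assumes "finite A" and "Suc (Suc t) \<le> card A"
  shows "real (t + 2) * real (card A - t) * (esym_on A t f * esym_on A (Suc (Suc t)) f)
      \<le> real (t + 1) * real (card A - t - 1) * (esym_on A (Suc t) f)\<^sup>2"
proof -
  define L where "L = card A"
  define X Y Z where "X = real (L choose t)" and "Y = real (L choose Suc t)" and "Z = real (L choose Suc (Suc t))"
  define p q r where "p = esym_on A t f" and "q = esym_on A (Suc t) f" and "r = esym_on A (Suc (Suc t)) f"
  have pos: "X > 0" "Y > 0" "Z > 0"
    using assms(2) by (simp_all add: X_def Y_def Z_def L_def)
  obtain xs where xs: "set xs = A" "distinct xs"
    using finite_distinct_list[OF assms(1)] by blast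
  moreover have "length xs = L"
    using distinct_card[OF xs(2)] xs(1) by (simp add: L_def)
  ultimately have mean: "p / X * (r / Z) \<le> (q / Y)\<^sup>2"
    using newton_esym[of t "map f xs"] assms
    by (simp add: esym_mean_def esym_map_eq_esym_on X_def Y_def Z_def p_def q_def r_def L_def)
  have step: "real (Suc s) * real (L choose Suc s) = real (L - s) * real (L choose s)" for s
    using binomial_absorption[of s L] binomial_absorb_comp[of L s] by (metis of_nat_mult)
  have "real (t + 1) * Y = real (L - t) * X" "real (t + 2) * Z = real (L - t - 1) * Y"
    unfolding X_def Y_def Z_def using step[of t] step[of "Suc t"] by simp_all
  then have binom: "real (t + 2) * real (L - t) * (X * Z) = real (t + 1) * real (L - t - 1) * (Y * Y)"
    by (metis mult.assoc mult.commute)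
  have "real (t + 2) * real (L - t) * (p * r) = real (t + 2) * real (L - t) * (X * Z) * (p / X * (r / Z))"
    using pos by (simp add: field_simps)
  also have "\<dots> \<le> real (t + 2) * real (L - t) * (X * Z) * (q / Y)\<^sup>2"
    using mean pos by (intro mult_left_mono) auto
  also have "\<dots> = real (t + 1) * real (L - t - 1) * q\<^sup>2"
    unfolding binom using pos by (simp add: field_simps power2_eq_square)
  finally show ?thesis by (simp add: p_def q_def r_def L_def)
qed

lemma esym_on_mult_le_sq:
  assumes "finite A"
  shows "esym_on A t f * esym_on A (Suc (Suc t)) f \<le> (esym_on A (Suc t) f)\<^sup>2"
proof (cases "Suc (Suc t) \<le> card A")
  case False
  then show ?thesis using esym_on_eq_0_if_card_less[OF assms] by simp
next
  case True
  define p q where "p = esym_on A t f * esym_on A (Suc (Suc t)) f" and "q = (esym_on A (Suc t) f)\<^sup>2"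
  define c1 c2 where "c1 = real (t + 1) * real (card A - t - 1)" and "c2 = real (t + 2) * real (card A - t)"
  have newton: "c2 * p \<le> c1 * q"
    using newton_esym_on[OF assms True] by (simp add: p_def q_def c1_def c2_def)
  have c: "0 < c1" "c1 \<le> c2"
    using True by (auto simp: c1_def c2_def intro!: mult_mono)
  show ?thesis
  proof (cases "p \<le> 0")
    case True
    then show ?thesis using zero_le_power2[of "esym_on A (Suc t) f"] unfolding p_def by linarith
  next
    case False
    then have "c1 * p \<le> c2 * p" using c by (intro mult_right_mono) auto
    then have "c1 * p \<le> c1 * q" using newton by linarith
    then show ?thesis using c by (simp add: p_def q_def)
  qed
qed

section \<open>The G\<aa>rding cone\<close>

lemma esym_on_pos_remove:
  assumes "finite A" and "x \<notin> A"
    and pos: "\<And>m. 1 \<le> m \<Longrightarrow> m \<le> k \<Longrightarrow> esym_on (insert x A) m f > 0"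
  shows "m < k \<Longrightarrow> esym_on A m f > 0"
proof (induction m)
  case 0
  then show ?case using assms(1) by simp
next
  case (Suc m)
  define y p q r where "y = f x" and "p = esym_on A m f"
    and "q = esym_on A (Suc m) f" and "r = esym_on A (Suc (Suc m)) f"
  have p: "p > 0" using Suc by (simp add: p_def)
  have ins: "y * p + q > 0" "y * q + r > 0"
    using pos[of "Suc m"] pos[of "Suc (Suc m)"] Suc.prems esym_on_insert[OF assms(1,2)]
    by (simp_all add: y_def p_def q_def r_def)
  have newton: "p * r \<le> q\<^sup>2"
    using esym_on_mult_le_sq[OF assms(1)] by (simp add: p_def q_def r_def)
  have "q > 0"
  proof (rule ccontr)
    assume "\<not> q > 0"
    have "(- q) * (- q) \<le> (y * p) * (- q)"
      using ins(1) \<open>\<not> q > 0\<close> by (intro mult_right_mono) auto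
    also have "\<dots> = p * (- y * q)" by simp
    also have "\<dots> < p * r"
      using p ins(2) by (intro mult_strict_left_mono) auto
    finally show False
      using newton by (simp add: power2_eq_square)
  qed
  then show ?case by (simp add: q_def)
qed

lemma esym_on_1: "finite A \<Longrightarrow> esym_on A 1 f = sum f A"
proof (induction A rule: finite_induct)
  case empty
  then show ?case using esym_on_eq_0_if_card_less[of "{}" 1 f] by simp
next
  case (insert x F)
  then show ?case using esym_on_insert[OF insert(1,2), of 0 f] by simp
qed

lemma abs_esym_on_le:
  assumes "finite A" and "K \<ge> 0" and "\<And>i. i \<in> A \<Longrightarrow> \<bar>f i\<bar> \<le> K"
  shows "\<bar>esym_on A m f\<bar> \<le> (K + 1) ^ card A"
  using assms(1,3)
proof (induction A arbitrary: m rule: finite_induct)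
  case empty
  then show ?case by (cases m) (auto simp: esym_on_eq_0_if_card_less)
next
  case (insert x F)
  show ?case
  proof (cases m)
    case 0
    then show ?thesis using insert(1) assms(2) by simp
  next
    case (Suc m')
    have "\<bar>esym_on (insert x F) m f\<bar> \<le> \<bar>f x\<bar> * \<bar>esym_on F m' f\<bar> + \<bar>esym_on F (Suc m') f\<bar>"
      unfolding Suc esym_on_insert[OF insert(1,2)] by (simp add: abs_mult abs_triangle_ineq[THEN order_trans])
    also have "\<dots> \<le> K * (K + 1) ^ card F + (K + 1) ^ card F"
      using insert assms(2) by (intro add_mono mult_mono) auto
    also have "\<dots> = (K + 1) ^ card (insert x F)"
      using insert(1,2) by (simp add: algebra_simps)
    finally show ?thesis .
  qed
qed

lemma newton_ratio_step:
  fixes p q r c \<mu> m :: real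
  assumes "0 < p" "0 < q" "1 \<le> c"
    and newton: "(m + 1) * (c + 1) * (p * r) \<le> m * c * q\<^sup>2" and ratio: "m * q \<le> (c + 1) * \<mu> * p"
  shows "(m + 1) * r \<le> c * \<mu> * q"
proof -
  have "(c + 1) * p * ((m + 1) * r) \<le> c * q * (m * q)"
    using newton by (simp add: power2_eq_square mult_ac)
  also have "\<dots> \<le> c * q * ((c + 1) * \<mu> * p)"
    using ratio assms(2,3) by (intro mult_left_mono) auto
  also have "\<dots> = (c + 1) * p * (c * \<mu> * q)"
    by (simp add: mult_ac)
  finally show ?thesis
    using assms(1,3) by (simp add: mult_le_cancel_left_pos)
qed

text \<open>Iterating Newton's inequality from \<sigma>_0 upwards bounds \<sigma>_m / \<sigma>_{m-1} by the mean entry.\<close>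

lemma esym_on_maclaurin_step:
  assumes "finite A" and "card A \<ge> 1"
  shows "1 \<le> m \<Longrightarrow> m \<le> card A + 1 \<Longrightarrow> (\<And>s. 1 \<le> s \<Longrightarrow> s < m \<Longrightarrow> esym_on A s f > 0) \<Longrightarrow>
    real m * esym_on A m f
      \<le> (real (card A) - real m + 1) * (esym_on A 1 f / real (card A)) * esym_on A (m - 1) f"
proof (induction m)
  case (Suc m)
  define L where "L = card A"
  define \<mu> where "\<mu> = esym_on A 1 f / real L"
  have L: "real L > 0" using assms(2) by (simp add: L_def)
  show ?case
  proof (cases "m = 0")
    case True
    have "real L * (esym_on A 1 f / real L) = esym_on A 1 f" using L by simp
    then show ?thesis using True assms(1) by (simp add: L_def)
  next
    case False
    then obtain t where t: "m = Suc t" by (cases m) auto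
    have IH: "real m * esym_on A m f \<le> (real L - real m + 1) * \<mu> * esym_on A (m - 1) f"
      using Suc False by (simp add: L_def \<mu>_def)
    have pos: "esym_on A m f > 0" "esym_on A (m - 1) f > 0"
      using Suc.prems(3)[of m] Suc.prems(3)[of "m - 1"] False assms(1) by (cases "m = 1"; simp)+
    show ?thesis
    proof (cases "Suc m \<le> L")
      case True
      have "1 \<le> real L - real m" using True by simp
      moreover have "(real m + 1) * (real L - real m + 1) * (esym_on A (m - 1) f * esym_on A (Suc m) f)
          \<le> real m * (real L - real m) * (esym_on A m f)\<^sup>2"
        using newton_esym_on[OF assms(1), of t f] True t by (simp add: of_nat_diff L_def)
      ultimately have "(real m + 1) * esym_on A (Suc m) f \<le> (real L - real m) * \<mu> * esym_on A m f"
        using newton_ratio_step[OF pos(2,1)] IH by blast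
      then show ?thesis by (simp add: \<mu>_def L_def algebra_simps)
    next
      case False
      then have "Suc m = L + 1" using Suc.prems by (simp add: L_def)
      then show ?thesis
        using esym_on_eq_0_if_card_less[OF assms(1), of "Suc m" f] by (simp add: L_def)
    qed
  qed
qed simp

lemma esym_on_entry_lower_bound:
  assumes U: "finite U" "card U = n" and "2 \<le> n" "1 \<le> k" "k \<le> n" "l \<in> U"
    and pos: "\<And>m. 1 \<le> m \<Longrightarrow> m \<le> k \<Longrightarrow> esym_on U m \<kappa> > 0"
    and max: "\<And>i. i \<in> U \<Longrightarrow> \<kappa> i \<le> K" and "K \<ge> 0"
  shows "\<kappa> l \<ge> - (real (n - k) / real k) * K"
proof -
  define L where "L = U - {l}"
  have L: "finite L" "l \<notin> L" "U = insert l L" "card L = n - 1"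
    using U \<open>l \<in> U\<close> by (auto simp: L_def)
  have posL: "m < k \<Longrightarrow> esym_on L m \<kappa> > 0" for m
    by (rule esym_on_pos_remove[OF L(1,2), of k]) (use pos L(3) in auto)
  define E R where "E = esym_on L (k - 1) \<kappa>" and "R = esym_on L k \<kappa>"
  have E: "E > 0" using posL[of "k - 1"] \<open>1 \<le> k\<close> by (simp add: E_def)
  have "esym_on L 1 \<kappa> = sum \<kappa> L" by (rule esym_on_1[OF L(1)])
  also have "\<dots> \<le> (\<Sum>i\<in>L. K)"
    using max L(3) by (intro sum_mono) auto
  also have "\<dots> = real (n - 1) * K"
    using L(4) by simp
  finally have mean: "esym_on L 1 \<kappa> / real (card L) \<le> K"
    using L(4) \<open>2 \<le> n\<close> by (simp add: divide_le_eq mult.commute)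
  have "real k * R \<le> (real (card L) - real k + 1) * (esym_on L 1 \<kappa> / real (card L)) * E"
    unfolding E_def R_def by (rule esym_on_maclaurin_step[OF L(1)]) (use L(4) assms(3-5) posL in auto)
  also have "\<dots> = real (n - k) * (esym_on L 1 \<kappa> / real (card L)) * E"
    using L(4) assms(3-5) by (simp add: of_nat_diff)
  also have "\<dots> \<le> real (n - k) * K * E"
    using mean E by (intro mult_right_mono mult_left_mono) auto
  finally have ratio: "real k * R \<le> real (n - k) * K * E" .
  have "\<kappa> l * E + R > 0"
    using pos[of k] esym_on_insert[OF L(1,2), of "k - 1" \<kappa>] L(3) \<open>1 \<le> k\<close>
    by (simp add: E_def R_def)
  then have "real k * (\<kappa> l * E) + real k * R > 0"
    using \<open>1 \<le> k\<close> by (simp flip: distrib_left)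
  then have "(- \<kappa> l * real k) * E < (real (n - k) * K) * E"
    using ratio by (simp add: mult_ac)
  then have "- \<kappa> l * real k < real (n - k) * K"
    using mult_less_cancel_right_pos[OF E] by blast
  then show ?thesis using \<open>1 \<le> k\<close> by (simp add: field_simps)
qed

lemma newton_esym_on_margin:
  assumes "finite Y" and "card Y = n - 2" and "2 \<le> k" and "2 \<le> n"
  shows "esym_on Y (k - 2) f * esym_on Y k f \<le> (1 - 1 / (real k * real n)) * (esym_on Y (k - 1) f)\<^sup>2"
proof (cases "k \<le> n - 2")
  case False
  then have "esym_on Y k f = 0"
    using esym_on_eq_0_if_card_less[OF assms(1)] assms(2) by simp
  moreover have "1 \<le> real k * real n"
    using mult_mono[of 1 "real k" 1 "real n"] assms(3,4) by simp
  ultimately show ?thesis by simp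
next
  case True
  define P Q R where "P = esym_on Y (k - 2) f" and "Q = esym_on Y (k - 1) f" and "R = esym_on Y k f"
  define \<alpha> where "\<alpha> = real k * (real n - real k)"
  obtain t where t: "k = Suc (Suc t)" using assms(3) by (metis add_2_eq_Suc le_Suc_ex)
  have "\<alpha> * (P * R) \<le> (real k - 1) * (real n - real k - 1) * Q\<^sup>2"
    using newton_esym_on[OF assms(1), of t f] True t assms(2,4)
    by (simp add: P_def Q_def R_def \<alpha>_def of_nat_diff algebra_simps)
  also have "(real k - 1) * (real n - real k - 1) = \<alpha> - (real n - 1)"
    by (simp add: \<alpha>_def algebra_simps)
  also have "\<alpha> - (real n - 1) \<le> \<alpha> * (1 - 1 / (real k * real n))"
  proof -
    have "\<alpha> / (real k * real n) = (real n - real k) / real n"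
      using assms(3,4) by (simp add: \<alpha>_def)
    also have "\<dots> \<le> 1"
      using assms(3,4) by simp
    also have "1 \<le> real n - 1"
      using True assms(3) by simp
    finally show ?thesis by (simp add: algebra_simps)
  qed
  finally have "\<alpha> * (P * R) \<le> \<alpha> * ((1 - 1 / (real k * real n)) * Q\<^sup>2)"
    by (simp add: mult_right_mono mult.assoc)
  moreover have "\<alpha> > 0" using True assms(3) by (simp add: \<alpha>_def)
  ultimately show ?thesis by (simp add: P_def Q_def R_def)
qed

lemma lower_bound_from_product_gap:
  fixes m M x \<epsilon> :: real
  assumes "0 < m" "m \<le> M" "0 < x" "x < m" and gap: "\<epsilon> * x\<^sup>2 < (m - x) * (M - x)"
    and "0 < \<epsilon>" "\<epsilon> \<le> 1"
  shows "\<epsilon> / 4 * m\<^sup>2 / (m + M) \<le> m - x"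
proof (cases "x \<le> m / 2")
  case True
  have "\<epsilon> / 4 * m\<^sup>2 / (m + M) \<le> 1 / 4 * m\<^sup>2 / m"
    using assms by (intro frac_le mult_right_mono) auto
  also have "\<dots> = m / 4" using \<open>0 < m\<close> by (simp add: power2_eq_square)
  finally show ?thesis using True \<open>0 < m\<close> by linarith
next
  case False
  have "\<epsilon> * (m / 2)\<^sup>2 \<le> \<epsilon> * x\<^sup>2"
    using False assms by (intro mult_left_mono power_mono) auto
  also have "\<dots> < (m - x) * (M - x)" by (rule gap)
  also have "\<dots> \<le> (m - x) * M"
    using assms by (intro mult_left_mono) auto
  finally have "\<epsilon> * m\<^sup>2 / 4 / M < m - x"
    using assms by (simp add: field_simps power2_eq_square)
  moreover have "\<epsilon> / 4 * m\<^sup>2 / (m + M) \<le> \<epsilon> * m\<^sup>2 / 4 / M"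
    using assms by (simp add: frac_le divide_left_mono)
  ultimately show ?thesis by linarith
qed

lemma affine_pair_lower_bound:
  fixes a b P Q R \<epsilon> :: real
  assumes "0 < a" "0 < b" "0 < P" "0 < a * P + Q" "0 < b * P + Q"
    and \<sigma>: "0 < a * b * P + (a + b) * Q + R" and newton: "P * R \<le> (1 - \<epsilon>) * Q\<^sup>2"
    and "0 < \<epsilon>" "\<epsilon> \<le> 1"
  shows "\<epsilon> / 4 * (min a b)\<^sup>2 * P / (a + b) \<le> min a b * P + Q"
proof -
  define m M where "m = min a b" and "M = max a b"
  have m: "0 < m" "m \<le> M" "m + M = a + b" using assms(1,2) by (auto simp: m_def M_def)
  show ?thesis
  proof (cases "0 \<le> Q")
    case True
    have "\<epsilon> / 4 * m\<^sup>2 / (a + b) \<le> 1 / 4 * m\<^sup>2 / m"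
      using assms m by (intro frac_le mult_right_mono) auto
    also have "\<dots> \<le> m" using m by (simp add: power2_eq_square)
    finally have "\<epsilon> / 4 * m\<^sup>2 / (a + b) * P \<le> m * P"
      using \<open>0 < P\<close> by (intro mult_right_mono) auto
    then show ?thesis using True by (simp add: m_def)
  next
    case False
    define x where "x = - Q / P"
    have Q: "Q = - x * P" using \<open>0 < P\<close> by (simp add: x_def)
    have x: "0 < x" "x < m"
      using False assms(1-5) by (auto simp: x_def m_def field_simps)
    have "P * R \<le> P * ((1 - \<epsilon>) * x\<^sup>2 * P)"
      using newton Q by (simp add: power2_eq_square mult_ac)
    then have "R \<le> (1 - \<epsilon>) * x\<^sup>2 * P" using \<open>0 < P\<close> by simp
    then have "0 < P * ((a - x) * (b - x) - \<epsilon> * x\<^sup>2)"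
      using \<sigma> Q by (simp add: algebra_simps power2_eq_square)
    then have "\<epsilon> * x\<^sup>2 < (m - x) * (M - x)"
      using \<open>0 < P\<close> by (auto simp: zero_less_mult_iff m_def M_def min_def max_def mult.commute)
    from lower_bound_from_product_gap[OF m(1,2) x this assms(8,9)]
    have "\<epsilon> / 4 * m\<^sup>2 / (a + b) * P \<le> (m - x) * P"
      using m \<open>0 < P\<close> by (intro mult_right_mono) auto
    then show ?thesis using Q by (simp add: m_def algebra_simps)
  qed
qed

lemma esym_on_insert2:
  assumes "finite Y" and "i \<notin> Y" and "j \<notin> Y" and "i \<noteq> j"
  shows "esym_on (insert i (insert j Y)) (Suc (Suc m)) f
    = f i * f j * esym_on Y m f + (f i + f j) * esym_on Y (Suc m) f + esym_on Y (Suc (Suc m)) f"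
  using assms by (simp add: esym_on_insert algebra_simps)

lemma esym_on_pair_pos:
  assumes "finite U" "i \<in> U" "j \<in> U" "i \<noteq> j" "2 \<le> k"
    and pos: "\<And>m. 1 \<le> m \<Longrightarrow> m \<le> k \<Longrightarrow> 0 < esym_on U m f"
  shows "0 < esym_on (U - {j}) (k - 1) f" "0 < esym_on (U - {i}) (k - 1) f"
    "0 < esym_on (U - {j} - {i}) (k - 2) f"
proof -
  have posj: "0 < esym_on (U - {j}) m f" if "m < k" for m
    using esym_on_pos_remove[of "U - {j}" j k f m] assms(1,3) pos that by (simp add: insert_absorb)
  have posi: "0 < esym_on (U - {i}) m f" if "m < k" for m
    using esym_on_pos_remove[of "U - {i}" i k f m] assms(1,2) pos that by (simp add: insert_absorb)
  show "0 < esym_on (U - {j}) (k - 1) f" "0 < esym_on (U - {i}) (k - 1) f"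
    using posj[of "k - 1"] posi[of "k - 1"] assms(5) by simp_all
  have "insert i (U - {j} - {i}) = U - {j}" using assms(2,4) by auto
  then show "0 < esym_on (U - {j} - {i}) (k - 2) f"
    using esym_on_pos_remove[of "U - {j} - {i}" i "k - 1" f "k - 2"] assms(1,5) posj by simp
qed

lemma esym_on_pair_bounds:
  assumes U: "finite U" "card U = n" and ij: "i \<in> U" "j \<in> U" "i \<noteq> j" and "2 \<le> k"
    and pos: "\<And>m. 1 \<le> m \<Longrightarrow> m \<le> k \<Longrightarrow> 0 < esym_on U m f" and N0: "N0 \<le> esym_on U k f"
  defines "A \<equiv> esym_on (U - {j}) (k - 1) f" and "B \<equiv> esym_on (U - {i}) (k - 1) f"
    and "P \<equiv> esym_on (U - {j} - {i}) (k - 2) f"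
  shows "0 < A" "0 < B" "0 < P" "A = B + (f i - f j) * P" "N0 * P \<le> A * B"
    and "0 < f i \<Longrightarrow> 0 < f j \<Longrightarrow>
      1 / (4 * real k * real n) * (min (f i) (f j))\<^sup>2 * P / (f i + f j) \<le> A \<and>
      1 / (4 * real k * real n) * (min (f i) (f j))\<^sup>2 * P / (f i + f j) \<le> B"
proof -
  show "0 < A" "0 < B" "0 < P"
    unfolding A_def B_def P_def using esym_on_pair_pos[OF U(1) ij \<open>2 \<le> k\<close> pos] by simp_all
  define Y where "Y = U - {j} - {i}"
  have Y: "finite Y" "i \<notin> Y" "j \<notin> Y" "card Y = n - 2"
    using U ij by (auto simp: Y_def card_Diff_subset)
  have split: "U - {j} = insert i Y" "U - {i} = insert j Y" "insert i (insert j Y) = U"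
    using ij by (auto simp: Y_def)
  have "2 \<le> n"
    using card_mono[OF U(1), of "{i, j}"] ij U(2) by simp
  have k: "Suc (k - 2) = k - 1" "Suc (k - 1) = k" using \<open>2 \<le> k\<close> by simp_all
  have P_Y: "P = esym_on Y (k - 2) f" by (simp add: P_def Y_def)
  define Q R where "Q = esym_on Y (k - 1) f" and "R = esym_on Y k f"
  have AB: "A = f i * P + Q" "B = f j * P + Q"
    using esym_on_insert[OF Y(1,2), of "k - 2" f] esym_on_insert[OF Y(1,3), of "k - 2" f]
    unfolding A_def B_def P_Y Q_def split k by simp_all
  then show "A = B + (f i - f j) * P" by (simp add: algebra_simps)
  have \<sigma>: "esym_on U k f = f i * f j * P + (f i + f j) * Q + R"
    using esym_on_insert2[OF Y(1-3) ij(3), of "k - 2" f] unfolding P_Y Q_def R_def split k .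
  have newton: "P * R \<le> (1 - 1 / (real k * real n)) * Q\<^sup>2"
    using newton_esym_on_margin[OF Y(1,4) \<open>2 \<le> k\<close> \<open>2 \<le> n\<close>] unfolding P_Y Q_def R_def .
  have \<epsilon>: "0 < 1 / (real k * real n)" "1 / (real k * real n) \<le> 1"
    using \<open>2 \<le> k\<close> \<open>2 \<le> n\<close> mult_mono[of 1 "real k" 1 "real n"] by simp_all
  then have "(1 - 1 / (real k * real n)) * Q\<^sup>2 \<le> 1 * Q\<^sup>2"
    by (intro mult_right_mono) auto
  moreover have "A * B - esym_on U k f * P = Q\<^sup>2 - P * R"
    unfolding AB \<sigma> by (simp add: algebra_simps power2_eq_square)
  moreover have "N0 * P \<le> esym_on U k f * P"
    using N0 \<open>0 < P\<close> by (intro mult_right_mono) auto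
  ultimately show "N0 * P \<le> A * B"
    using newton by linarith
  assume "0 < f i" "0 < f j"
  moreover have "0 < esym_on U k f" using pos[of k] \<open>2 \<le> k\<close> by simp
  ultimately have "1 / (real k * real n) / 4 * (min (f i) (f j))\<^sup>2 * P / (f i + f j)
      \<le> min (f i) (f j) * P + Q"
    using affine_pair_lower_bound[OF _ _ \<open>0 < P\<close> _ _ _ newton \<epsilon>] AB \<sigma> \<open>0 < A\<close> \<open>0 < B\<close> by simp
  moreover have "min (f i) (f j) * P + Q \<le> A" "min (f i) (f j) * P + Q \<le> B"
    using AB \<open>0 < P\<close> by (simp_all add: mult_right_mono)
  ultimately show "1 / (4 * real k * real n) * (min (f i) (f j))\<^sup>2 * P / (f i + f j) \<le> A \<and>
      1 / (4 * real k * real n) * (min (f i) (f j))\<^sup>2 * P / (f i + f j) \<le> B"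
    by (simp add: mult_ac)
qed

section \<open>Derivatives of \<sigma>_k\<close>

lemma esym_on_insert_upd:
  assumes "finite A" and "x \<notin> A"
  shows "esym_on (insert x A) (Suc m) (f(x := t)) = t * esym_on A m f + esym_on A (Suc m) f"
proof -
  have "esym_on A r (f(x := t)) = esym_on A r f" for r
    using assms(2) by (intro esym_on_cong) auto
  then show ?thesis using esym_on_insert[OF assms] by simp
qed

lemma sigma_d1_eq:
  assumes "j \<in> {1..n}" and "1 \<le> k"
  shows "sigma_d1 n k \<kappa> j = esym_on ({1..n} - {j}) (k - 1) \<kappa>"
proof -
  define U where "U = {1..n} - {j}"
  have U: "finite U" "j \<notin> U" "{1..n} = insert j U" using assms(1) by (auto simp: U_def)
  obtain k' where k': "k = Suc k'" using assms(2) by (cases k) auto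
  have "((\<lambda>t. sigma n k (\<kappa>(j := t))) has_real_derivative esym_on U k' \<kappa>) (at (\<kappa> j))"
    unfolding sigma_eq_esym_on U(3) k' esym_on_insert_upd[OF U(1,2)]
    by (auto intro!: derivative_eq_intros)
  then show ?thesis
    unfolding sigma_d1_def using k' by (simp add: U_def DERIV_imp_deriv)
qed

lemma sigma_d2_eq:
  assumes "i \<in> {1..n}" and "j \<in> {1..n}" and "i \<noteq> j" and "2 \<le> k"
  shows "sigma_d2 n k \<kappa> i j = esym_on ({1..n} - {j} - {i}) (k - 2) \<kappa>"
proof -
  define V where "V = {1..n} - {j} - {i}"
  have V: "finite V" "i \<notin> V" "{1..n} - {j} = insert i V" using assms(1,3) by (auto simp: V_def)
  have k: "1 \<le> k" "k - 1 = Suc (k - 2)" using assms(4) by simp_all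
  have "((\<lambda>s. sigma_d1 n k (\<kappa>(i := s)) j) has_real_derivative esym_on V (k - 2) \<kappa>) (at (\<kappa> i))"
    unfolding sigma_d1_eq[OF assms(2) k(1)] V(3) k(2) esym_on_insert_upd[OF V(1,2)]
    by (auto intro!: derivative_eq_intros)
  then show ?thesis
    unfolding sigma_d2_def by (simp add: V_def DERIV_imp_deriv)
qed

section \<open>The scalar inequality\<close>

text \<open>exp_dd a b = e^{-a} (e^a - e^b) / (a - b), extended by its limit 1 on the diagonal.\<close>

definition exp_dd :: "real \<Rightarrow> real \<Rightarrow> real" where
  "exp_dd a b = (if a = b then 1 else (1 - exp (b - a)) / (a - b))"

lemma exp_dd_ge_1:
  assumes "a \<le> b"
  shows "1 \<le> exp_dd a b"
proof (cases "a = b")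
  case False
  have "1 - exp (b - a) \<le> a - b"
    using exp_ge_add_one_self[of "b - a"] by linarith
  then show ?thesis using False assms by (simp add: exp_dd_def le_divide_eq)
qed (simp add: exp_dd_def)

lemma key_ineq_le:
  assumes "a \<le> b" "b \<le> K" "3 * K / 4 \<le> a" "16 \<le> K" "200 \<le> ee * K" "0 < ee" "0 < A" "0 < P"
    and A: "ee * a\<^sup>2 * P / (a + b) \<le> A"
  shows "A + (a + b) * P \<le> 2 * a * exp_dd a b * A"
proof -
  have "1 \<le> a" "0 < a + b" using assms(1,3,4) by simp_all
  have "(a + b)\<^sup>2 \<le> (2 * K)\<^sup>2"
    using assms(1-4) by (intro power_mono) auto
  also have "\<dots> \<le> 200 * (27 / 64) * K\<^sup>2"
    using zero_le_power2[of K] by (simp add: power_mult_distrib)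
  also have "\<dots> \<le> (ee * K) * (27 / 64) * K\<^sup>2"
    using assms(5) by (intro mult_right_mono) auto
  also have "\<dots> = ee * (3 * K / 4) ^ 3"
    by (simp add: power2_eq_square power3_eq_cube)
  also have "\<dots> \<le> ee * a ^ 3"
    using assms(3,4,6) by (intro mult_left_mono power_mono) auto
  finally have "(a + b)\<^sup>2 \<le> ee * a ^ 3" .
  then have "(a + b)\<^sup>2 * P / (a + b) \<le> ee * a ^ 3 * P / (a + b)"
    using \<open>0 < a + b\<close> \<open>0 < P\<close> by (intro divide_right_mono mult_right_mono) auto
  moreover have "(a + b) * P = (a + b)\<^sup>2 * P / (a + b)"
    using \<open>0 < a + b\<close> by (simp add: power2_eq_square)
  ultimately have "(a + b) * P \<le> ee * a ^ 3 * P / (a + b)"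
    by simp
  also have "\<dots> = a * (ee * a\<^sup>2 * P / (a + b))"
    by (simp add: power2_eq_square power3_eq_cube)
  also have "\<dots> \<le> a * A"
    using \<open>1 \<le> a\<close> A by (intro mult_left_mono) auto
  moreover have "1 * A \<le> a * A"
    using \<open>1 \<le> a\<close> \<open>0 < A\<close> by (intro mult_right_mono) auto
  ultimately have "A + (a + b) * P \<le> 2 * a * A * 1"
    by simp
  also have "\<dots> \<le> 2 * a * A * exp_dd a b"
    using exp_dd_ge_1[OF assms(1)] \<open>1 \<le> a\<close> \<open>0 < A\<close> by (intro mult_left_mono) auto
  finally show ?thesis by (simp add: mult_ac)
qed

lemma key_ineq_gt:
  assumes "b < a" and "A = B + (a - b) * P"
    and "2 * a * (a - b) * exp (b - a) * P \<le> B * (2 * a * (1 - exp (b - a)) - (a - b))"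
  shows "A + (a + b) * P \<le> 2 * a * exp_dd a b * A"
proof -
  define d E where "d = a - b" and "E = exp (b - a)"
  have "d > 0" using assms(1) by (simp add: d_def)
  have "d * (A + (a + b) * P) = 2 * a * (1 - E) * A - (B * (2 * a * (1 - E) - d) - 2 * a * d * E * P)"
    unfolding assms(2) d_def by (simp add: algebra_simps)
  also have "\<dots> \<le> 2 * a * (1 - E) * A"
    using assms(3) by (simp add: d_def E_def)
  finally show ?thesis
    using \<open>d > 0\<close> assms(1) by (simp add: exp_dd_def d_def E_def field_simps)
qed

text \<open>The key estimate is e^{-d} (1 + d) \<le> 1 for d = a - b.\<close>

lemma exp_gap_bound:
  fixes a b B P :: real
  assumes "0 \<le> b" and "b < a" and "2 \<le> a" and "0 < P" and B: "2 * a * P \<le> B * (a - 1)"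
  shows "2 * a * (a - b) * exp (b - a) * P \<le> B * (2 * a * (1 - exp (b - a)) - (a - b))"
proof -
  define d E where "d = a - b" and "E = exp (b - a)"
  have d: "0 < d" "d \<le> a" using assms(1,2) by (simp_all add: d_def)
  have "0 < 2 * a * P" using assms(3,4) by simp
  then have "0 < B * (a - 1)" using B by linarith
  then have "B > 0" using assms(3) by (simp add: zero_less_mult_iff)
  have E: "E * (1 + d) \<le> 1"
  proof -
    have "E * (1 + d) \<le> E * exp d"
      using exp_ge_add_one_self[of d] by (simp add: E_def)
    also have "\<dots> = 1" by (simp add: E_def d_def flip: exp_add)
    finally show ?thesis .
  qed
  have "d * (a - 1) \<le> (1 + d) * (2 * a * (1 - E) - d)"
  proof -
    have "2 * a * d \<le> 2 * a * ((1 + d) * (1 - E))"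
      using E assms(3) by (intro mult_left_mono) (auto simp: algebra_simps)
    moreover have "0 \<le> d * (a - d)" using d by simp
    ultimately show ?thesis by (simp add: algebra_simps)
  qed
  then have "B * (d * (a - 1)) \<le> B * ((1 + d) * (2 * a * (1 - E) - d))"
    using \<open>B > 0\<close> by (intro mult_left_mono) auto
  moreover have "d * (2 * a * P) \<le> d * (B * (a - 1))"
    using B d by (intro mult_left_mono) auto
  moreover have "(1 + d) * (2 * a * d * E * P) \<le> 2 * a * d * P"
    using mult_left_mono[OF E, of "2 * a * d * P"] d assms(4) by (simp add: mult_ac)
  ultimately have "(1 + d) * (2 * a * d * E * P) \<le> (1 + d) * (B * (2 * a * (1 - E) - d))"
    by (simp add: mult_ac)
  then show ?thesis
    using d by (simp add: d_def E_def)
qed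

lemma key_ineq_gt_near:
  assumes "K / 4 \<le> b" "b < a" "a \<le> K" "3 * K / 4 \<le> a" "16 \<le> K" "200 \<le> ee * K" "0 < ee" "0 < P"
    and "A = B + (a - b) * P" and B: "ee * b\<^sup>2 * P / (a + b) \<le> B"
  shows "A + (a + b) * P \<le> 2 * a * exp_dd a b * A"
proof (rule key_ineq_gt[OF assms(2,9) exp_gap_bound[OF _ assms(2) _ assms(8)]])
  have "ee * K * P / 32 = ee * (K / 4)\<^sup>2 * P / (2 * K)"
    using assms(5) by (simp add: power2_eq_square)
  also have "\<dots> \<le> ee * b\<^sup>2 * P / (a + b)"
    using assms(1-5,7,8) by (intro frac_le mult_right_mono mult_left_mono power_mono) auto
  also have "\<dots> \<le> B" by (rule B)
  finally have "ee * K * P / 32 \<le> B" .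
  moreover have "200 * P / 32 \<le> ee * K * P / 32"
    using assms(6,8) by (intro divide_right_mono mult_right_mono) auto
  ultimately have "200 * P / 32 * (a - 1) \<le> B * (a - 1)"
    using assms(4,5) by (intro mult_right_mono) auto
  moreover have "12 * P \<le> a * P"
    using assms(4,5,8) by (intro mult_right_mono) auto
  moreover have "200 * P / 32 * (a - 1) = 25 / 4 * (a * P) - 25 / 4 * P"
    by (simp add: field_simps)
  moreover have "2 * a * P = 2 * (a * P)"
    by simp
  ultimately show "2 * a * P \<le> B * (a - 1)"
    using assms(8) by linarith
qed (use assms in auto)

lemma key_ineq_gt_far:
  fixes n :: nat
  assumes th: "0 \<le> th" "th < 1" and "0 < K"
    and ab: "b < K / 4" "3 * K / 4 \<le> a" "a \<le> K" "- th * K \<le> b" "(1 - th) * K / 2 \<le> a + b"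
    and \<delta>: "exp (- (K / 2)) \<le> (1 - th) / 16" "16 * K * (K + 1) ^ n * exp (- (K / 2)) \<le> N0 * (1 - th)"
    and "0 < B" "0 < P" "A = B + (a - b) * P" "N0 * P \<le> A * B" "A \<le> (K + 1) ^ n"
  shows "A + (a + b) * P \<le> 2 * a * exp_dd a b * A"
proof (rule key_ineq_gt)
  define \<delta> E c where "\<delta> = exp (- (K / 2))" and "E = exp (b - a)" and "c = (1 - th) * K / 4"
  have "th * K \<le> K" using th \<open>0 < K\<close> by simp
  then have d: "K / 2 \<le> a - b" "a - b \<le> 2 * K" using ab by linarith+
  have E: "0 < E" "E \<le> \<delta>" using d(1) by (simp_all add: E_def \<delta>_def)
  have Kpow: "0 < (K + 1) ^ n" using \<open>0 < K\<close> by simp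
  have "2 * a * E \<le> 2 * K * \<delta>"
    using ab E \<open>0 < K\<close> by (intro mult_mono) auto
  also have "\<dots> \<le> (1 - th) * K / 8"
    using \<delta>(1) \<open>0 < K\<close> by (simp add: \<delta>_def)
  moreover have "2 * a * (1 - E) - (a - b) = (a + b) - 2 * a * E"
    by (simp add: algebra_simps)
  moreover have "0 \<le> (1 - th) * K" using th \<open>0 < K\<close> by simp
  ultimately have c: "c \<le> 2 * a * (1 - E) - (a - b)"
    using ab(5) unfolding c_def by linarith
  have "(K + 1) ^ n * (2 * a * (a - b) * E * P) \<le> (K + 1) ^ n * (2 * K * (2 * K) * \<delta> * P)"
    using ab d E \<open>0 < K\<close> \<open>0 < P\<close> Kpow
    by (intro mult_left_mono mult_right_mono mult_mono) auto
  also have "\<dots> = (16 * K * (K + 1) ^ n * \<delta>) * (K / 4) * P"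
    by (simp add: algebra_simps)
  also have "\<dots> \<le> N0 * c * P"
    using \<delta>(2) \<open>0 < K\<close> \<open>0 < P\<close> by (simp add: \<delta>_def c_def mult_right_mono)
  also have "\<dots> \<le> (K + 1) ^ n * (B * c)"
  proof -
    have "A * B \<le> (K + 1) ^ n * B"
      using \<open>A \<le> (K + 1) ^ n\<close> \<open>0 < B\<close> by (intro mult_right_mono) auto
    then have "N0 * P \<le> (K + 1) ^ n * B"
      using \<open>N0 * P \<le> A * B\<close> by linarith
    moreover have "0 \<le> c" using th \<open>0 < K\<close> by (simp add: c_def)
    ultimately have "N0 * P * c \<le> (K + 1) ^ n * B * c" by (rule mult_right_mono)
    then show ?thesis by (simp add: mult_ac)
  qed
  finally have "2 * a * (a - b) * E * P \<le> B * c"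
    using Kpow by simp
  also have "\<dots> \<le> B * (2 * a * (1 - E) - (a - b))"
    using c \<open>0 < B\<close> by (intro mult_left_mono) auto
  finally show "2 * a * (a - b) * exp (b - a) * P \<le> B * (2 * a * (1 - exp (b - a)) - (a - b))"
    by (simp add: E_def)
qed (use assms in auto)

lemma sqrt_le_mult_self:
  assumes "0 < s" and "4 / s\<^sup>2 \<le> K"
  shows "sqrt K \<le> s * K / 2"
proof -
  have "0 \<le> 4 / s\<^sup>2" by simp
  then have "0 \<le> K" using assms(2) by linarith
  have "2 / s = sqrt (4 / s\<^sup>2)"
    using assms(1) by (simp add: real_sqrt_divide)
  also have "\<dots> \<le> sqrt K"
    using assms(2) by (rule real_sqrt_le_mono)
  finally have "2 * sqrt K \<le> s * sqrt K * sqrt K"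
    using assms(1) \<open>0 \<le> K\<close> by (intro mult_right_mono) (auto simp: field_simps)
  also have "\<dots> = s * K"
    using \<open>0 \<le> K\<close> by (simp add: mult.assoc)
  finally show ?thesis by simp
qed

definition large_scale :: "real \<Rightarrow> real \<Rightarrow> real \<Rightarrow> nat \<Rightarrow> real \<Rightarrow> bool" where
  "large_scale th ee N0 n K \<longleftrightarrow> 16 \<le> K \<and> 200 \<le> ee * K \<and> 4 / (1 - th)\<^sup>2 \<le> K \<and>
    exp (- (K / 2)) \<le> (1 - th) / 16 \<and> 16 * K * (K + 1) ^ n * exp (- (K / 2)) \<le> N0 * (1 - th)"

lemma key_inequality:
  fixes n :: nat
  assumes th: "0 \<le> th" "th < 1" and "0 < ee" and "1 \<le> n" and "large_scale th ee N0 n K"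
    and a: "K - sqrt K / real n < a" "a \<le> K" and b: "- th * K \<le> b" "b \<le> K"
    and AB: "0 < A" "0 < B" "0 < P" "A = B + (a - b) * P" "N0 * P \<le> A * B" "A \<le> (K + 1) ^ n"
    and eps: "0 < a \<Longrightarrow> 0 < b \<Longrightarrow>
      ee * (min a b)\<^sup>2 * P / (a + b) \<le> A \<and> ee * (min a b)\<^sup>2 * P / (a + b) \<le> B"
  shows "A + (a + b) * P \<le> 2 * a * exp_dd a b * A"
proof -
  have K: "16 \<le> K" "200 \<le> ee * K" "4 / (1 - th)\<^sup>2 \<le> K"
    "exp (- (K / 2)) \<le> (1 - th) / 16" "16 * K * (K + 1) ^ n * exp (- (K / 2)) \<le> N0 * (1 - th)"
    using \<open>large_scale th ee N0 n K\<close> by (simp_all add: large_scale_def)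
  have "sqrt K / real n \<le> sqrt K / 1"
    using \<open>1 \<le> n\<close> K(1) by (intro divide_left_mono) auto
  moreover have "sqrt K \<le> (1 / 2) * K / 2"
    using K(1) by (intro sqrt_le_mult_self) (auto simp: power2_eq_square)
  ultimately have a34: "3 * K / 4 \<le> a" using a(1) by simp
  consider (le) "a \<le> b" | (near) "K / 4 \<le> b" "b < a" | (far) "b < K / 4" "b < a"
    by linarith
  then show ?thesis
  proof cases
    case le
    then show ?thesis
      using key_ineq_le[OF le b(2) a34 K(1,2) \<open>0 < ee\<close> AB(1,3)] eps a34 K(1) by (simp add: min_def)
  next
    case near
    then show ?thesis
      using key_ineq_gt_near[OF near a(2) a34 K(1,2) \<open>0 < ee\<close> AB(3,4)] eps a34 K(1)
      by (simp add: min_def)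
  next
    case far
    have "sqrt K \<le> (1 - th) * K / 2"
      using th K(3) by (intro sqrt_le_mult_self) auto
    then have "(1 - th) * K / 2 \<le> a + b"
      using a b \<open>sqrt K / real n \<le> sqrt K / 1\<close> by (simp add: algebra_simps)
    then show ?thesis
      using key_ineq_gt_far[OF th _ far(1) a34 a(2) b(1) _ K(4,5) AB(2-6)] K(1) by simp
  qed
qed

lemma poly_exp_decay:
  fixes n :: nat and c :: real
  assumes "0 < c"
  shows "eventually (\<lambda>K. K * (K + 1) ^ n * exp (- (K / 2)) \<le> c) at_top"
proof -
  have "filterlim (\<lambda>K::real. K * (1 / 2)) at_top at_top"
    by (rule filterlim_at_top_mult_tendsto_pos[OF tendsto_const _ filterlim_ident]) simp
  then have "((\<lambda>K::real. (K * (1 / 2)) ^ (n + 1) / exp (K * (1 / 2))) \<longlongrightarrow> 0) at_top"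
    by (rule filterlim_compose[OF tendsto_power_div_exp_0])
  then have "eventually (\<lambda>K::real. (K * (1 / 2)) ^ (n + 1) / exp (K * (1 / 2)) < c / 4 ^ (n + 1)) at_top"
    by (rule order_tendstoD(2)) (simp add: assms)
  then have "eventually (\<lambda>K::real. (K / 2) ^ (n + 1) / exp (K / 2) < c / 4 ^ (n + 1)) at_top"
    by simp
  then show ?thesis
    using eventually_ge_at_top[of 1]
  proof eventually_elim
    case (elim K)
    have "K * (K + 1) ^ n \<le> (K + 1) ^ (n + 1)"
      using elim(2) by (simp add: mult_right_mono)
    also have "\<dots> \<le> (4 * (K / 2)) ^ (n + 1)"
      using elim(2) by (intro power_mono) auto
    also have "\<dots> = 4 ^ (n + 1) * (K / 2) ^ (n + 1)"
      by (rule power_mult_distrib)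
    finally have "K * (K + 1) ^ n * exp (- (K / 2)) \<le> 4 ^ (n + 1) * (K / 2) ^ (n + 1) / exp (K / 2)"
      by (simp add: exp_minus divide_right_mono flip: divide_inverse)
    also have "\<dots> = 4 ^ (n + 1) * ((K / 2) ^ (n + 1) / exp (K / 2))"
      by simp
    also have "\<dots> \<le> 4 ^ (n + 1) * (c / 4 ^ (n + 1))"
      using elim(1) by (intro mult_left_mono) auto
    also have "\<dots> = c"
      by simp
    finally show ?case .
  qed
qed

lemma eventually_large_scale:
  fixes th ee N0 :: real and n :: nat
  assumes "th < 1" and "0 < ee" and "0 < N0"
  shows "eventually (large_scale th ee N0 n) at_top"
proof -
  have c: "0 < (1 - th) / 16" "0 < N0 * (1 - th) / 16"
    using assms by simp_all
  show ?thesis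
    using eventually_ge_at_top[of 16] eventually_ge_at_top[of "200 / ee"]
      eventually_ge_at_top[of "4 / (1 - th)\<^sup>2"]
      poly_exp_decay[OF c(1), of 0] poly_exp_decay[OF c(2), of n]
  proof eventually_elim
    case (elim K)
    have "exp (- (K / 2)) \<le> K * exp (- (K / 2))"
      using elim(1) by simp
    moreover have "K * (K + 1) ^ 0 * exp (- (K / 2)) = K * exp (- (K / 2))"
      by simp
    ultimately have "exp (- (K / 2)) \<le> (1 - th) / 16"
      using elim(4) by linarith
    moreover have "16 * K * (K + 1) ^ n * exp (- (K / 2)) = 16 * (K * (K + 1) ^ n * exp (- (K / 2)))"
      by (simp add: mult_ac)
    then have "16 * K * (K + 1) ^ n * exp (- (K / 2)) \<le> N0 * (1 - th)"
      using elim(5) by linarith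
    moreover have "200 \<le> ee * K"
      using elim(2) assms(2) by (simp add: field_simps)
    ultimately show ?case
      using elim(1,3) by (simp add: large_scale_def)
  qed
qed

lemma key_inequality_Gamma:
  assumes k: "1 \<le> k" "k \<le> n" "n < 2 * k"
    and large: "large_scale (real (n - k) / real k) (1 / (4 * real k * real n)) N0 n (\<kappa> 1)"
    and \<kappa>: "\<kappa> \<in> Gamma n k" "\<forall>l\<in>{1..n}. \<kappa> l \<le> \<kappa> 1" "N0 \<le> sigma n k \<kappa>"
    and ij: "i \<in> {1..n}" "j \<in> {1..n}" "i \<noteq> j" "\<kappa> 1 - sqrt (\<kappa> 1) / real n < \<kappa> i"
  shows "sigma_d1 n k \<kappa> j + (\<kappa> i + \<kappa> j) * sigma_d2 n k \<kappa> i j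
    \<le> 2 * \<kappa> i * exp_dd (\<kappa> i) (\<kappa> j) * sigma_d1 n k \<kappa> j"
proof -
  have "2 \<le> n" using card_mono[of "{1..n}" "{i, j}"] ij by simp
  then have "2 \<le> k" using k by simp
  have th: "0 \<le> real (n - k) / real k" "real (n - k) / real k < 1"
    using k by (simp_all add: of_nat_diff)
  have "0 \<le> \<kappa> 1" using large by (simp add: large_scale_def)
  have U: "finite {1..n}" "card {1..n} = n" "N0 \<le> esym_on {1..n} k \<kappa>"
    using \<kappa> by (simp_all add: sigma_eq_esym_on)
  have pos: "\<And>m. 1 \<le> m \<Longrightarrow> m \<le> k \<Longrightarrow> 0 < esym_on {1..n} m \<kappa>"
    using \<kappa> by (auto simp: Gamma_def sigma_eq_esym_on)
  have lower: "- (real (n - k) / real k) * \<kappa> 1 \<le> \<kappa> l" if "l \<in> {1..n}" for l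
    using esym_on_entry_lower_bound[OF U(1,2) \<open>2 \<le> n\<close> k(1,2) that pos] \<kappa> \<open>0 \<le> \<kappa> 1\<close> by simp
  have "\<bar>\<kappa> l\<bar> \<le> \<kappa> 1" if "l \<in> {1..n} - {j}" for l
    using lower[of l] \<kappa>(2) that th mult_right_mono[OF _ \<open>0 \<le> \<kappa> 1\<close>, of "real (n - k) / real k" 1]
    by (simp add: abs_le_iff)
  then have "\<bar>esym_on ({1..n} - {j}) (k - 1) \<kappa>\<bar> \<le> (\<kappa> 1 + 1) ^ card ({1..n} - {j})"
    using \<open>0 \<le> \<kappa> 1\<close> by (intro abs_esym_on_le) auto
  also have "\<dots> \<le> (\<kappa> 1 + 1) ^ n"
    using \<open>0 \<le> \<kappa> 1\<close> card_Diff1_le[of "{1..n}" j] by (intro power_increasing) auto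
  finally have bound: "esym_on ({1..n} - {j}) (k - 1) \<kappa> \<le> (\<kappa> 1 + 1) ^ n" by simp
  note pair = esym_on_pair_bounds[OF U(1,2) ij(1-3) \<open>2 \<le> k\<close> pos U(3)]
  have "\<kappa> i \<le> \<kappa> 1" "\<kappa> j \<le> \<kappa> 1" "1 \<le> n" "0 < 1 / (4 * real k * real n)"
    using \<kappa>(2) ij k by auto
  from key_inequality[OF th this(4,3) large ij(4) this(1) lower[OF ij(2)] this(2) pair(1-5) bound pair(6)]
  show ?thesis
    unfolding sigma_d1_eq[OF ij(2) k(1)] sigma_d2_eq[OF ij(1-3) \<open>2 \<le> k\<close>] .
qed

lemma mult_exp_dd_eq_if:
  "2 * a * exp_dd a b * A = (if a = b then 2 * a * A else 2 * a * (1 - exp (b - a)) / (a - b) * A)"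
  by (simp add: exp_dd_def)

theorem lemma3p3:
  fixes n k :: nat and N0 :: real
  assumes "1 \<le> k" "k \<le> n" "n < 2 * k" "N0 > 0"
  shows "\<exists>M0::real. \<forall>\<kappa> :: nat \<Rightarrow> real.
     \<kappa> \<in> Gamma n k \<and> (\<forall>l\<in>{1..n}. \<kappa> l \<le> \<kappa> 1) \<and> \<kappa> 1 \<ge> M0 \<and> sigma n k \<kappa> \<ge> N0 \<longrightarrow>
     (\<forall>i\<in>{1..n}. \<forall>j\<in>{1..n}. i \<noteq> j \<and> \<kappa> i > \<kappa> 1 - sqrt (\<kappa> 1) / real n \<longrightarrow>
        (if \<kappa> i = \<kappa> j then 2 * \<kappa> i * sigma_d1 n k \<kappa> j
         else 2 * \<kappa> i * (1 - exp (\<kappa> j - \<kappa> i)) / (\<kappa> i - \<kappa> j) * sigma_d1 n k \<kappa> j)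
        \<ge> sigma_d1 n k \<kappa> j + (\<kappa> i + \<kappa> j) * sigma_d2 n k \<kappa> i j)"
proof -
  have "real (n - k) / real k < 1" "0 < 1 / (4 * real k * real n)"
    using assms by (simp_all add: of_nat_diff)
  from eventually_large_scale[OF this assms(4)]
  obtain M where "\<And>K. M \<le> K \<Longrightarrow> large_scale (real (n - k) / real k) (1 / (4 * real k * real n)) N0 n K"
    unfolding eventually_at_top_linorder by blast
  from key_inequality_Gamma[OF assms(1-3) this] show ?thesis
    unfolding mult_exp_dd_eq_if[symmetric] by blast
qed

end
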